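(* Let $\mathcal{R}$ be a coherent risk measure on $\mathscr{L}^2$ with dual representation $\mathcal{R}(\xi_0)=\sup_{\eta_0\in\mathcal{Q}}\mathbb{E}(\xi_0\eta_0)$ for all $\xi_0\in\mathscr{L}^2$, where $\mathcal{Q}\subset\mathcal{P}$ is its (unique) risk envelope, and let $\mathcal{V}$ be a coherent regret measure on $\mathscr{L}^2$ with dual representation $\mathcal{V}(\xi_0)=\sup_{\eta_0\in\tilde{\mathcal{Q}}}\mathbb{E}(\xi_0\eta_0)$ for all $\xi_0\in\mathscr{L}^2$, where $\tilde{\mathcal{Q}}\subset\tilde{\mathcal{P}}$ is its (unique) regret envelope and $\tilde{\mathcal{Q}}$ is compact. Then $$\mathcal{R}(\xi_0)=\inf_{y\in\mathbb{R}}\{\,y+\mathcal{V}(\xi_0-y)\,\}\quad\text{for all }\xi_0\in\mathscr{L}^2$$ holds if and only if $\mathcal{Q}=\tilde{\mathcal{Q}}\cap\mathcal{P}$.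
   Context: $\mathscr{L}^2$ denotes the space of square-integrable real random variables on a fixed probability space with probability measure $\mathbb{P}$; $\mathbb{E}$ is expectation with respect to $\mathbb{P}$; inequalities between random variables hold almost everywhere. A functional $\mathcal{R}:\mathscr{L}^2\to(-\infty,+\infty]$ is a coherent risk measure if: (A1) $\mathcal{R}(C)=C$ for every constant $C$; (A2) $\mathcal{R}((1-\lambda)\xi_0+\lambda\xi_0')\le(1-\lambda)\mathcal{R}(\xi_0)+\lambda\mathcal{R}(\xi_0')$ for $\lambda\in[0,1]$; (A3) $\mathcal{R}(\xi_0)\le\mathcal{R}(\xi_0')$ whenever $\xi_0\le\xi_0'$ a.e.; (A4) if $\|\xi_0^k-\xi_0\|_2\to0$ and $\mathcal{R}(\xi_0^k)\le C$ for all $k$, then $\mathcal{R}(\xi_0)\le C$; (A5) $\mathcal{R}(\lambda\xi_0)=\lambda\mathcal{R}(\xi_0)$ for $\lambda>0$. A functional $\mathcal{V}:\mathscr{L}^2\to(-\infty,+\infty]$ is a coherent regret measure if: (B1) $\mathcal{V}(0)=0$; (B2) $\mathcal{V}$ is convex in the sense of (A2); (B3) $\mathcal{V}(\xi_0)\le\mathcal{V}(\xi_0')$ whenever $\xi_0\le\xi_0'$ a.e.; (B4) if $\|\xi_0^k-\xi_0\|_2\to0$ and $\mathcal{V}(\xi_0^k)\le0$ for all $k$, then $\mathcal{V}(\xi_0)\le0$; (B5) $\mathcal{V}(\lambda\xi_0)=\lambda\mathcal{V}(\xi_0)$ for $\lambda>0$. Set $\mathcal{P}=\{\eta_0\in\mathscr{L}^2:\mathbb{E}(\eta_0)=1,\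 \eta_0\ge0\}$ and $\tilde{\mathcal{P}}=\{\eta_0\in\mathscr{L}^2:\eta_0\ge0\}$. Every coherent risk measure $\mathcal{R}$ admits a unique nonempty, convex, closed set $\mathcal{Q}\subset\mathcal{P}$ (its risk envelope) with $\mathcal{R}(\xi_0)=\sup_{\eta_0\in\mathcal{Q}}\mathbb{E}(\xi_0\eta_0)$; every coherent regret measure $\mathcal{V}$ admits a unique nonempty, convex, closed set $\tilde{\mathcal{Q}}\subset\tilde{\mathcal{P}}$ with $\mathcal{V}(\xi_0)=\sup_{\eta_0\in\tilde{\mathcal{Q}}}\mathbb{E}(\xi_0\eta_0)$. *)

theory Defs
  imports "HOL-Probability.Probability"
begin

text \<open>The space L2 of square-integrable real random variables on the probability
space M (represented by functions; a.e.-equal functions are not identified,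
but all notions below are insensitive to a.e. modification).\<close>

definition L2 :: "'a measure \<Rightarrow> ('a \<Rightarrow> real) set" where
  "L2 M = {f. f \<in> borel_measurable M \<and> integrable M (\<lambda>x. (f x)\<^sup>2)}"

definition l2norm :: "'a measure \<Rightarrow> ('a \<Rightarrow> real) \<Rightarrow> real" where
  "l2norm M f = sqrt (integral\<^sup>L M (\<lambda>x. (f x)\<^sup>2))"

definition Ex :: "'a measure \<Rightarrow> ('a \<Rightarrow> real) \<Rightarrow> real" where
  "Ex M f = integral\<^sup>L M f"

definition coherent_risk_measure :: "'a measure \<Rightarrow> (('a \<Rightarrow> real) \<Rightarrow> ereal) \<Rightarrow> bool" where
  "coherent_risk_measure M R \<longleftrightarrow>
     (\<forall>C::real. R (\<lambda>_. C) = ereal C) \<and>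
     (\<forall>\<xi>\<in>L2 M. \<forall>\<xi>'\<in>L2 M. \<forall>l::real. 0 \<le> l \<and> l \<le> 1 \<longrightarrow>
        R (\<lambda>x. (1 - l) * \<xi> x + l * \<xi>' x) \<le> ereal (1 - l) * R \<xi> + ereal l * R \<xi>') \<and>
     (\<forall>\<xi>\<in>L2 M. \<forall>\<xi>'\<in>L2 M. (AE x in M. \<xi> x \<le> \<xi>' x) \<longrightarrow> R \<xi> \<le> R \<xi>') \<and>
     (\<forall>\<xi>s \<xi> (C::real). (\<forall>k. \<xi>s k \<in> L2 M) \<and> \<xi> \<in> L2 M \<and>
        (\<lambda>k. l2norm M (\<lambda>x. \<xi>s k x - \<xi> x)) \<longlonglongrightarrow> 0 \<and> (\<forall>k. R (\<xi>s k) \<le> ereal C)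
        \<longrightarrow> R \<xi> \<le> ereal C) \<and>
     (\<forall>\<xi>\<in>L2 M. \<forall>l::real. l > 0 \<longrightarrow> R (\<lambda>x. l * \<xi> x) = ereal l * R \<xi>)"

definition coherent_regret_measure :: "'a measure \<Rightarrow> (('a \<Rightarrow> real) \<Rightarrow> ereal) \<Rightarrow> bool" where
  "coherent_regret_measure M V \<longleftrightarrow>
     V (\<lambda>_. 0) = 0 \<and>
     (\<forall>\<xi>\<in>L2 M. \<forall>\<xi>'\<in>L2 M. \<forall>l::real. 0 \<le> l \<and> l \<le> 1 \<longrightarrow>
        V (\<lambda>x. (1 - l) * \<xi> x + l * \<xi>' x) \<le> ereal (1 - l) * V \<xi> + ereal l * V \<xi>') \<and>
     (\<forall>\<xi>\<in>L2 M. \<forall>\<xi>'\<in>L2 M. (AE x in M. \<xi> x \<le> \<xi>' x) \<longrightarrow> V \<xi> \<le> V \<xi>') \<and>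
     (\<forall>\<xi>s \<xi>. (\<forall>k. \<xi>s k \<in> L2 M) \<and> \<xi> \<in> L2 M \<and>
        (\<lambda>k. l2norm M (\<lambda>x. \<xi>s k x - \<xi> x)) \<longlonglongrightarrow> 0 \<and> (\<forall>k. V (\<xi>s k) \<le> 0)
        \<longrightarrow> V \<xi> \<le> 0) \<and>
     (\<forall>\<xi>\<in>L2 M. \<forall>l::real. l > 0 \<longrightarrow> V (\<lambda>x. l * \<xi> x) = ereal l * V \<xi>)"

definition Pset :: "'a measure \<Rightarrow> ('a \<Rightarrow> real) set" where
  "Pset M = {\<eta> \<in> L2 M. Ex M \<eta> = 1 \<and> (AE x in M. \<eta> x \<ge> 0)}"

definition Ptilde :: "'a measure \<Rightarrow> ('a \<Rightarrow> real) set" where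
  "Ptilde M = {\<eta> \<in> L2 M. AE x in M. \<eta> x \<ge> 0}"

definition L2_convex :: "('a \<Rightarrow> real) set \<Rightarrow> bool" where
  "L2_convex S \<longleftrightarrow> (\<forall>\<eta>\<in>S. \<forall>\<eta>'\<in>S. \<forall>t::real. 0 \<le> t \<and> t \<le> 1 \<longrightarrow>
      (\<lambda>x. (1 - t) * \<eta> x + t * \<eta>' x) \<in> S)"

text \<open>Closedness in the L2-norm topology (sequential, which is equivalent in a
(pseudo)metric space).\<close>
definition L2_closed :: "'a measure \<Rightarrow> ('a \<Rightarrow> real) set \<Rightarrow> bool" where
  "L2_closed M S \<longleftrightarrow> (\<forall>\<eta>s \<eta>. (\<forall>k. \<eta>s k \<in> S) \<and> \<eta> \<in> L2 M \<and>
      (\<lambda>k. l2norm M (\<lambda>x. \<eta>s k x - \<eta> x)) \<longlonglongrightarrow> 0 \<longrightarrow> \<eta> \<in> S)"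

text \<open>Compactness in the L2-norm topology (sequential compactness, equivalent in a
(pseudo)metric space).\<close>
definition L2_compact :: "'a measure \<Rightarrow> ('a \<Rightarrow> real) set \<Rightarrow> bool" where
  "L2_compact M S \<longleftrightarrow> S \<subseteq> L2 M \<and> (\<forall>\<eta>s. (\<forall>k. \<eta>s k \<in> S) \<longrightarrow>
      (\<exists>(r::nat \<Rightarrow> nat) \<eta>. strict_mono r \<and> \<eta> \<in> S \<and>
         (\<lambda>k. l2norm M (\<lambda>x. \<eta>s (r k) x - \<eta> x)) \<longlonglongrightarrow> 0))"

definition risk_envelope :: "'a measure \<Rightarrow> (('a \<Rightarrow> real) \<Rightarrow> ereal) \<Rightarrow> ('a \<Rightarrow> real) set \<Rightarrow> bool" where
  "risk_envelope M R Q \<longleftrightarrow> Q \<noteq> {} \<and> L2_convex Q \<and> L2_closed M Q \<and> Q \<subseteq> Pset M \<and>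
     (\<forall>\<xi>\<in>L2 M. R \<xi> = (SUP \<eta>\<in>Q. ereal (Ex M (\<lambda>x. \<xi> x * \<eta> x))))"

definition regret_envelope :: "'a measure \<Rightarrow> (('a \<Rightarrow> real) \<Rightarrow> ereal) \<Rightarrow> ('a \<Rightarrow> real) set \<Rightarrow> bool" where
  "regret_envelope M V Q \<longleftrightarrow> Q \<noteq> {} \<and> L2_convex Q \<and> L2_closed M Q \<and> Q \<subseteq> Ptilde M \<and>
     (\<forall>\<xi>\<in>L2 M. V \<xi> = (SUP \<eta>\<in>Q. ereal (Ex M (\<lambda>x. \<xi> x * \<eta> x))))"

end

theory Submission
  imports Defs
begin

text \<open>Write <\<xi>, \<eta>> for E(\<xi> \<eta>). By the dual representation of V, y + V(\<xi> - y) is the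
  supremum over \<eta> in Qt of <\<xi>, \<eta>> + y (1 - E \<eta>), and for \<eta> in Qt \<inter> P this term does not
  depend on y. Hence inf_y (y + V(\<xi> - y)) dominates the support function of Qt \<inter> P at \<xi>.
  Compactness and convexity of Qt make the two equal: a line separating the compact convex
  image of Qt under \<eta> \<mapsto> (E \<eta>, <\<xi>, \<eta>>) from a point just above the slice E \<eta> = 1 provides
  an almost optimal y. So the formula says exactly that R is the support function of Qt \<inter> P,
  and support functions determine closed convex sets: a point outside a compact convex set is
  strictly separated from it by the residual of its nearest point in the set.\<close>

abbreviation L2_inner :: "'a measure \<Rightarrow> ('a \<Rightarrow> real) \<Rightarrow> ('a \<Rightarrow> real) \<Rightarrow> real" where
  "L2_inner M f g \<equiv> Ex M (\<lambda>x. f x * g x)"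

lemma L2_imp_integrable:
  assumes "prob_space M" "f \<in> L2 M"
  shows "integrable M f"
proof -
  interpret prob_space M by fact
  show ?thesis
    by (rule square_integrable_imp_integrable) (use assms(2) in \<open>auto simp: L2_def\<close>)
qed

lemma integrable_mult_L2:
  assumes "f \<in> L2 M" "g \<in> L2 M"
  shows "integrable M (\<lambda>x. f x * g x)"
proof (rule Bochner_Integration.integrable_bound)
  have [measurable]: "f \<in> borel_measurable M" "g \<in> borel_measurable M"
    using assms by (auto simp: L2_def)
  show "integrable M (\<lambda>x. (f x)\<^sup>2 + (g x)\<^sup>2)"
    using assms by (auto simp: L2_def)
  show "(\<lambda>x. f x * g x) \<in> borel_measurable M"
    by measurable
  have "\<bar>u * v\<bar> \<le> u\<^sup>2 + v\<^sup>2" for u v :: real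
  proof -
    have "2 * \<bar>u * v\<bar> \<le> u\<^sup>2 + v\<^sup>2"
      using sum_squares_bound[of "\<bar>u\<bar>" "\<bar>v\<bar>"] by (simp add: abs_mult mult.assoc)
    then show ?thesis
      using abs_ge_zero[of "u * v"] by linarith
  qed
  then show "AE x in M. norm (f x * g x) \<le> norm ((f x)\<^sup>2 + (g x)\<^sup>2)"
    by (intro AE_I2) simp
qed

lemma L2_lin_comb:
  assumes "f \<in> L2 M" "g \<in> L2 M"
  shows "(\<lambda>x. a * f x + b * g x) \<in> L2 M"
proof -
  have [measurable]: "f \<in> borel_measurable M" "g \<in> borel_measurable M"
    using assms by (auto simp: L2_def)
  have "integrable M (\<lambda>x. (a * f x + b * g x)\<^sup>2)"
  proof (rule Bochner_Integration.integrable_bound)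
    show "integrable M (\<lambda>x. 2 * a\<^sup>2 * (f x)\<^sup>2 + 2 * b\<^sup>2 * (g x)\<^sup>2)"
      using assms by (auto simp: L2_def)
    show "(\<lambda>x. (a * f x + b * g x)\<^sup>2) \<in> borel_measurable M"
      by measurable
    have "(u + v)\<^sup>2 \<le> 2 * u\<^sup>2 + 2 * v\<^sup>2" for u v :: real
      using sum_squares_bound[of u v] by (simp add: power2_sum)
    from this[of "a * f x" "b * g x" for x]
    show "AE x in M. norm ((a * f x + b * g x)\<^sup>2) \<le> norm (2 * a\<^sup>2 * (f x)\<^sup>2 + 2 * b\<^sup>2 * (g x)\<^sup>2)"
      by (auto simp: power_mult_distrib mult.assoc)
  qed
  then show ?thesis
    by (simp add: L2_def)
qed

lemma L2_const:
  assumes "prob_space M"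
  shows "(\<lambda>_. c) \<in> L2 M"
proof -
  interpret prob_space M by fact
  show ?thesis by (simp add: L2_def)
qed

lemma L2_diff: "f \<in> L2 M \<Longrightarrow> g \<in> L2 M \<Longrightarrow> (\<lambda>x. f x - g x) \<in> L2 M"
  using L2_lin_comb[of f M g 1 "-1"] by simp

lemma L2_diff_const: "prob_space M \<Longrightarrow> f \<in> L2 M \<Longrightarrow> (\<lambda>x. f x - c) \<in> L2 M"
  using L2_diff[OF _ L2_const] by blast

lemma L2_inner_lin_comb_right:
  assumes "f \<in> L2 M" "g \<in> L2 M" "h \<in> L2 M"
  shows "L2_inner M f (\<lambda>x. a * g x + b * h x) = a * L2_inner M f g + b * L2_inner M f h"
proof -
  have "(\<lambda>x. f x * (a * g x + b * h x)) = (\<lambda>x. a * (f x * g x) + b * (f x * h x))"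
    by (auto simp: algebra_simps)
  then show ?thesis
    using integrable_mult_L2[OF assms(1,2)] integrable_mult_L2[OF assms(1,3)] by (simp add: Ex_def)
qed

lemma L2_inner_diff_right:
  assumes "f \<in> L2 M" "g \<in> L2 M" "h \<in> L2 M"
  shows "L2_inner M f (\<lambda>x. g x - h x) = L2_inner M f g - L2_inner M f h"
  using L2_inner_lin_comb_right[OF assms, of 1 "-1"] by simp

lemma L2_inner_diff_const_left:
  assumes "prob_space M" "f \<in> L2 M" "g \<in> L2 M"
  shows "L2_inner M (\<lambda>x. f x - c) g = L2_inner M f g - c * Ex M g"
proof -
  have "(\<lambda>x. (f x - c) * g x) = (\<lambda>x. f x * g x - c * g x)"
    by (auto simp: algebra_simps)
  then show ?thesis
    using integrable_mult_L2[OF assms(2,3)] L2_imp_integrable[OF assms(1,3)] by (simp add: Ex_def)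
qed

lemma Ex_square_diff_expand:
  assumes "f \<in> L2 M" "g \<in> L2 M"
  shows "Ex M (\<lambda>x. (f x - t * g x)\<^sup>2)
    = Ex M (\<lambda>x. (f x)\<^sup>2) - 2 * t * L2_inner M f g + t\<^sup>2 * Ex M (\<lambda>x. (g x)\<^sup>2)"
proof -
  have "(\<lambda>x. (f x - t * g x)\<^sup>2) = (\<lambda>x. (f x)\<^sup>2 - (2 * t) * (f x * g x) + t\<^sup>2 * (g x)\<^sup>2)"
    by (auto simp: power2_eq_square algebra_simps)
  then show ?thesis
    using integrable_mult_L2[OF assms] assms by (simp add: Ex_def L2_def)
qed

lemma Ex_square_nonneg: "Ex M (\<lambda>x. (f x)\<^sup>2) \<ge> 0"
  by (simp add: Ex_def)

lemma l2norm_square: "(l2norm M f)\<^sup>2 = Ex M (\<lambda>x. (f x)\<^sup>2)"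
  using Ex_square_nonneg[of M f] by (simp add: l2norm_def Ex_def)

lemma L2_Cauchy_Schwarz:
  assumes "f \<in> L2 M" "g \<in> L2 M"
  shows "\<bar>L2_inner M f g\<bar> \<le> l2norm M f * l2norm M g"
proof -
  have [measurable]: "f \<in> borel_measurable M" "g \<in> borel_measurable M"
    using assms by (auto simp: L2_def)
  have int: "integrable M (\<lambda>x. \<bar>f x * g x\<bar>)" "integrable M (\<lambda>x. (f x)\<^sup>2)" "integrable M (\<lambda>x. (g x)\<^sup>2)"
    using integrable_mult_L2[OF assms] assms by (auto simp: L2_def)
  have "(\<integral>\<^sup>+x. ennreal \<bar>f x\<bar> * ennreal \<bar>g x\<bar> \<partial>M)\<^sup>2
      \<le> (\<integral>\<^sup>+x. (ennreal \<bar>f x\<bar>)\<^sup>2 \<partial>M) * (\<integral>\<^sup>+x. (ennreal \<bar>g x\<bar>)\<^sup>2 \<partial>M)"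
    by (rule Cauchy_Schwarz_nn_integral) measurable
  then have "ennreal ((integral\<^sup>L M (\<lambda>x. \<bar>f x * g x\<bar>))\<^sup>2)
      \<le> ennreal (integral\<^sup>L M (\<lambda>x. (f x)\<^sup>2) * integral\<^sup>L M (\<lambda>x. (g x)\<^sup>2))"
    using int by (simp add: nn_integral_eq_integral abs_mult ennreal_power ennreal_mult[symmetric])
  then have "(integral\<^sup>L M (\<lambda>x. \<bar>f x * g x\<bar>))\<^sup>2 \<le> (l2norm M f * l2norm M g)\<^sup>2"
    by (simp add: power_mult_distrib l2norm_square Ex_def)
  then have "integral\<^sup>L M (\<lambda>x. \<bar>f x * g x\<bar>) \<le> l2norm M f * l2norm M g"
    by (rule power2_le_imp_le) (simp add: l2norm_def)
  moreover have "\<bar>L2_inner M f g\<bar> \<le> integral\<^sup>L M (\<lambda>x. \<bar>f x * g x\<bar>)"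
    unfolding Ex_def by (rule integral_abs_bound)
  ultimately show ?thesis
    by linarith
qed

lemma L2_inner_tendsto_right:
  assumes "f \<in> L2 M" "\<And>k. gs k \<in> L2 M" "g \<in> L2 M"
    and "(\<lambda>k. l2norm M (\<lambda>x. gs k x - g x)) \<longlonglongrightarrow> 0"
  shows "(\<lambda>k. L2_inner M f (gs k)) \<longlonglongrightarrow> L2_inner M f g"
proof (rule LIM_zero_cancel, rule Lim_null_comparison)
  show "(\<lambda>k. l2norm M f * l2norm M (\<lambda>x. gs k x - g x)) \<longlonglongrightarrow> 0"
    using tendsto_mult_right_zero[OF assms(4)] .
  show "\<forall>\<^sub>F k in sequentially. norm (L2_inner M f (gs k) - L2_inner M f g)
      \<le> l2norm M f * l2norm M (\<lambda>x. gs k x - g x)"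
    using L2_Cauchy_Schwarz[OF assms(1) L2_diff[OF assms(2,3)]]
    by (simp add: L2_inner_diff_right[OF assms(1,2,3)])
qed

lemma L2_compact_closed_subset:
  assumes "L2_compact M S" "T \<subseteq> S" "L2_closed M T"
  shows "L2_compact M T"
  unfolding L2_compact_def
proof (intro conjI allI impI)
  show "T \<subseteq> L2 M"
    using assms(1,2) by (auto simp: L2_compact_def)
  fix \<eta>s :: "nat \<Rightarrow> 'a \<Rightarrow> real"
  assume \<eta>s: "\<forall>k. \<eta>s k \<in> T"
  then obtain r \<eta> where "strict_mono r" "\<eta> \<in> S"
    and lim: "(\<lambda>k. l2norm M (\<lambda>x. \<eta>s (r k) x - \<eta> x)) \<longlonglongrightarrow> 0"
    using assms(1,2) unfolding L2_compact_def by blast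
  moreover have "\<eta> \<in> L2 M"
    using assms(1) \<open>\<eta> \<in> S\<close> by (auto simp: L2_compact_def)
  then have "\<eta> \<in> T"
    using assms(3)[unfolded L2_closed_def, rule_format, of "\<lambda>k. \<eta>s (r k)" \<eta>] \<eta>s lim by simp
  ultimately show "\<exists>r \<eta>. strict_mono r \<and> \<eta> \<in> T \<and> (\<lambda>k. l2norm M (\<lambda>x. \<eta>s (r k) x - \<eta> x)) \<longlonglongrightarrow> 0"
    by blast
qed

lemma Ex_square_diff_le:
  assumes "f \<in> L2 M" "g \<in> L2 M" "h \<in> L2 M"
  shows "Ex M (\<lambda>x. (f x - g x)\<^sup>2)
    \<le> Ex M (\<lambda>x. (f x - h x)\<^sup>2) + 2 * (L2_inner M (\<lambda>x. f x - g x) h - L2_inner M (\<lambda>x. f x - g x) g)"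
proof -
  have fgL: "(\<lambda>x. f x - g x) \<in> L2 M"
    using L2_diff[OF assms(1,2)] .
  have "Ex M (\<lambda>x. (f x - h x)\<^sup>2) = Ex M (\<lambda>x. (f x - g x - 1 * (h x - g x))\<^sup>2)"
    by (simp add: algebra_simps)
  also have "\<dots> = Ex M (\<lambda>x. (f x - g x)\<^sup>2) - 2 * 1 * L2_inner M (\<lambda>x. f x - g x) (\<lambda>x. h x - g x)
      + 1\<^sup>2 * Ex M (\<lambda>x. (h x - g x)\<^sup>2)"
    by (rule Ex_square_diff_expand[OF fgL L2_diff[OF assms(3,2)]])
  also have "\<dots> = Ex M (\<lambda>x. (f x - g x)\<^sup>2) - 2 * (L2_inner M (\<lambda>x. f x - g x) h - L2_inner M (\<lambda>x. f x - g x) g)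
      + Ex M (\<lambda>x. (h x - g x)\<^sup>2)"
    by (simp add: L2_inner_diff_right[OF fgL assms(3,2)])
  finally show ?thesis
    using Ex_square_nonneg[of M "\<lambda>x. h x - g x"] by linarith
qed

lemma L2_compact_nearest_point:
  assumes "L2_compact M S" "S \<noteq> {}" "\<eta>0 \<in> L2 M"
  obtains p where "p \<in> S" "\<And>\<eta>. \<eta> \<in> S \<Longrightarrow> Ex M (\<lambda>x. (\<eta>0 x - p x)\<^sup>2) \<le> Ex M (\<lambda>x. (\<eta>0 x - \<eta> x)\<^sup>2)"
proof -
  have SL: "S \<subseteq> L2 M"
    using assms(1) by (simp add: L2_compact_def)
  define d where "d \<eta> = Ex M (\<lambda>x. (\<eta>0 x - \<eta> x)\<^sup>2)" for \<eta>
  define m where "m = Inf (d ` S)"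
  have bdd: "bdd_below (d ` S)"
    by (intro bdd_belowI[where m = 0]) (auto simp: d_def Ex_square_nonneg)
  have m_le: "m \<le> d \<eta>" if "\<eta> \<in> S" for \<eta>
    unfolding m_def using bdd that by (auto intro: cInf_lower)
  have "\<exists>\<eta>\<in>S. d \<eta> < m + inverse (real (Suc k))" for k
    using cInf_lessD[of "d ` S" "m + inverse (real (Suc k))"] assms(2) by (auto simp: m_def)
  then obtain \<eta>s where \<eta>s: "\<And>k. \<eta>s k \<in> S" "\<And>k. d (\<eta>s k) < m + inverse (real (Suc k))"
    by metis
  then obtain r p where r: "strict_mono r" and "p \<in> S"
    and lim: "(\<lambda>k. l2norm M (\<lambda>x. \<eta>s (r k) x - p x)) \<longlonglongrightarrow> 0"
    using assms(1) unfolding L2_compact_def by blast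
  have pL: "p \<in> L2 M" and \<eta>sL: "\<And>k. \<eta>s k \<in> L2 M"
    using SL \<open>p \<in> S\<close> \<eta>s(1) by auto
  define \<xi> where "\<xi> = (\<lambda>x. \<eta>0 x - p x)"
  have \<xi>L: "\<xi> \<in> L2 M"
    unfolding \<xi>_def using L2_diff[OF assms(3) pL] .
  have d_p_le: "d p \<le> d (\<eta>s k) + 2 * (L2_inner M \<xi> (\<eta>s k) - L2_inner M \<xi> p)" for k
    unfolding d_def \<xi>_def by (rule Ex_square_diff_le[OF assms(3) pL \<eta>sL])
  have lim_bound: "(\<lambda>k. m + inverse (real (Suc (r k))) + 2 * (L2_inner M \<xi> (\<eta>s (r k)) - L2_inner M \<xi> p))
      \<longlonglongrightarrow> m + 0 + 2 * (L2_inner M \<xi> p - L2_inner M \<xi> p)"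
    using LIMSEQ_subseq_LIMSEQ[OF LIMSEQ_inverse_real_of_nat r]
      L2_inner_tendsto_right[OF \<xi>L \<eta>sL pL lim]
    by (intro tendsto_intros) (simp_all add: o_def)
  have "d p \<le> m + inverse (real (Suc (r k))) + 2 * (L2_inner M \<xi> (\<eta>s (r k)) - L2_inner M \<xi> p)" for k
    using d_p_le[of "r k"] \<eta>s(2)[of "r k"] by linarith
  then have "d p \<le> m + 0 + 2 * (L2_inner M \<xi> p - L2_inner M \<xi> p)"
    by (intro LIMSEQ_le_const[OF lim_bound]) blast
  then have "d p \<le> d \<eta>" if "\<eta> \<in> S" for \<eta>
    using m_le[OF that] by simp
  then show ?thesis
    using that[OF \<open>p \<in> S\<close>] unfolding d_def by blast
qed

lemma L2_nearest_point_variational_ineq: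
  assumes "L2_convex S" "S \<subseteq> L2 M" "\<eta>0 \<in> L2 M" "p \<in> S" "\<eta> \<in> S"
    and p_min: "\<And>\<eta>. \<eta> \<in> S \<Longrightarrow> Ex M (\<lambda>x. (\<eta>0 x - p x)\<^sup>2) \<le> Ex M (\<lambda>x. (\<eta>0 x - \<eta> x)\<^sup>2)"
  shows "L2_inner M (\<lambda>x. \<eta>0 x - p x) (\<lambda>x. \<eta> x - p x) \<le> 0"
proof (rule ccontr)
  define a where "a = L2_inner M (\<lambda>x. \<eta>0 x - p x) (\<lambda>x. \<eta> x - p x)"
  define b where "b = Ex M (\<lambda>x. (\<eta> x - p x)\<^sup>2)"
  assume "\<not> ?thesis"
  then have "a > 0"
    by (simp add: a_def)
  have "b \<ge> 0"
    unfolding b_def by (rule Ex_square_nonneg)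
  \<comment> \<open>moving from p a small step t towards \<eta> would decrease the distance to \<eta>0\<close>
  define t where "t = min 1 (a / (b + 1))"
  have "t > 0" "t \<le> 1"
    using \<open>a > 0\<close> \<open>b \<ge> 0\<close> by (auto simp: t_def)
  have pL: "p \<in> L2 M" and \<eta>L: "\<eta> \<in> L2 M"
    using assms(2,4,5) by auto
  have step_in_S: "(\<lambda>x. (1 - t) * p x + t * \<eta> x) \<in> S"
    using assms(1,4,5) \<open>t > 0\<close> \<open>t \<le> 1\<close> unfolding L2_convex_def by auto
  have step_dist: "(\<lambda>x. (\<eta>0 x - ((1 - t) * p x + t * \<eta> x))\<^sup>2) = (\<lambda>x. (\<eta>0 x - p x - t * (\<eta> x - p x))\<^sup>2)"
    by (simp add: algebra_simps)
  have "Ex M (\<lambda>x. (\<eta>0 x - p x)\<^sup>2) \<le> Ex M (\<lambda>x. (\<eta>0 x - p x - t * (\<eta> x - p x))\<^sup>2)"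
    using p_min[OF step_in_S] unfolding step_dist .
  also have "\<dots> = Ex M (\<lambda>x. (\<eta>0 x - p x)\<^sup>2) - 2 * t * a + t\<^sup>2 * b"
    unfolding a_def b_def by (rule Ex_square_diff_expand[OF L2_diff[OF assms(3) pL] L2_diff[OF \<eta>L pL]])
  finally have "2 * a \<le> t * b"
    using \<open>t > 0\<close> by (simp add: power2_eq_square)
  also have "t * b \<le> a / (b + 1) * b"
    using \<open>b \<ge> 0\<close> by (intro mult_right_mono) (auto simp: t_def)
  also have "\<dots> < a"
    using \<open>a > 0\<close> \<open>b \<ge> 0\<close> by (simp add: field_simps)
  finally show False
    using \<open>a > 0\<close> by simp
qed

lemma L2_separation_compact_convex:
  assumes "L2_compact M S" "L2_convex S" "L2_closed M S" "S \<noteq> {}"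
    and "\<eta>0 \<in> L2 M" "\<eta>0 \<notin> S"
  obtains \<xi> c where "\<xi> \<in> L2 M" "\<And>\<eta>. \<eta> \<in> S \<Longrightarrow> L2_inner M \<xi> \<eta> \<le> c" "c < L2_inner M \<xi> \<eta>0"
proof -
  have SL: "S \<subseteq> L2 M"
    using assms(1) by (simp add: L2_compact_def)
  obtain p where "p \<in> S"
    and p_min: "\<And>\<eta>. \<eta> \<in> S \<Longrightarrow> Ex M (\<lambda>x. (\<eta>0 x - p x)\<^sup>2) \<le> Ex M (\<lambda>x. (\<eta>0 x - \<eta> x)\<^sup>2)"
    using L2_compact_nearest_point[OF assms(1,4,5)] by blast
  have pL: "p \<in> L2 M"
    using SL \<open>p \<in> S\<close> by auto
  define \<xi> where "\<xi> = (\<lambda>x. \<eta>0 x - p x)"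
  have \<xi>L: "\<xi> \<in> L2 M"
    unfolding \<xi>_def using L2_diff[OF assms(5) pL] .
  have bound: "L2_inner M \<xi> \<eta> \<le> L2_inner M \<xi> p" if "\<eta> \<in> S" for \<eta>
  proof -
    have "L2_inner M \<xi> (\<lambda>x. \<eta> x - p x) \<le> 0"
      unfolding \<xi>_def by (rule L2_nearest_point_variational_ineq[OF assms(2) SL assms(5) \<open>p \<in> S\<close> that p_min])
    then show ?thesis
      using L2_inner_diff_right[OF \<xi>L _ pL, of \<eta>] SL that by auto
  qed
  moreover have "Ex M (\<lambda>x. (\<xi> x)\<^sup>2) > 0"
  proof (rule ccontr)
    assume "\<not> ?thesis"
    then have "Ex M (\<lambda>x. (\<xi> x)\<^sup>2) = 0"
      using Ex_square_nonneg[of M \<xi>] by linarith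
    then have "l2norm M (\<lambda>x. p x - \<eta>0 x) = 0"
      by (simp add: l2norm_def Ex_def \<xi>_def power2_commute)
    then have "(\<lambda>k::nat. l2norm M (\<lambda>x. p x - \<eta>0 x)) \<longlonglongrightarrow> 0"
      by simp
    then have "\<eta>0 \<in> S"
      using assms(3)[unfolded L2_closed_def, rule_format, of "\<lambda>_. p" \<eta>0] \<open>p \<in> S\<close> assms(5) by simp
    with assms(6) show False ..
  qed
  moreover have "L2_inner M \<xi> \<eta>0 - L2_inner M \<xi> p = Ex M (\<lambda>x. (\<xi> x)\<^sup>2)"
    using L2_inner_diff_right[OF \<xi>L assms(5) pL] by (simp add: \<xi>_def power2_eq_square)
  ultimately show ?thesis
    by (intro that[OF \<xi>L bound]) auto
qed

lemma convex_L2_inner_pair_image: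
  assumes "L2_convex S" "S \<subseteq> L2 M" "f \<in> L2 M" "g \<in> L2 M"
  shows "convex ((\<lambda>\<eta>. (L2_inner M f \<eta>, L2_inner M g \<eta>)) ` S)"
  unfolding convex_alt
proof (intro ballI allI impI)
  fix p q and t :: real
  assume "p \<in> (\<lambda>\<eta>. (L2_inner M f \<eta>, L2_inner M g \<eta>)) ` S" "q \<in> (\<lambda>\<eta>. (L2_inner M f \<eta>, L2_inner M g \<eta>)) ` S"
    and t: "0 \<le> t \<and> t \<le> 1"
  then obtain \<eta> \<eta>' where "\<eta> \<in> S" "\<eta>' \<in> S"
    and pq: "p = (L2_inner M f \<eta>, L2_inner M g \<eta>)" "q = (L2_inner M f \<eta>', L2_inner M g \<eta>')"
    by auto
  define \<theta> where "\<theta> = (\<lambda>x. (1 - t) * \<eta> x + t * \<eta>' x)"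
  have "\<theta> \<in> S"
    using assms(1) \<open>\<eta> \<in> S\<close> \<open>\<eta>' \<in> S\<close> t unfolding L2_convex_def \<theta>_def by blast
  moreover have "L2_inner M h \<theta> = (1 - t) * L2_inner M h \<eta> + t * L2_inner M h \<eta>'" if "h \<in> L2 M" for h
    unfolding \<theta>_def using L2_inner_lin_comb_right[OF that] assms(2) \<open>\<eta> \<in> S\<close> \<open>\<eta>' \<in> S\<close> by blast
  ultimately show "(1 - t) *\<^sub>R p + t *\<^sub>R q \<in> (\<lambda>\<eta>. (L2_inner M f \<eta>, L2_inner M g \<eta>)) ` S"
    using assms(3,4) unfolding pq by (intro image_eqI[where x = \<theta>]) simp_all
qed

lemma compact_L2_inner_pair_image:
  assumes "L2_compact M S" "f \<in> L2 M" "g \<in> L2 M"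
  shows "compact ((\<lambda>\<eta>. (L2_inner M f \<eta>, L2_inner M g \<eta>)) ` S)"
  unfolding compact_eq_seq_compact_metric seq_compact_def
proof (intro allI impI)
  fix s :: "nat \<Rightarrow> real \<times> real"
  assume "\<forall>n. s n \<in> (\<lambda>\<eta>. (L2_inner M f \<eta>, L2_inner M g \<eta>)) ` S"
  then have "\<forall>n. \<exists>\<eta>\<in>S. s n = (L2_inner M f \<eta>, L2_inner M g \<eta>)"
    by blast
  then obtain \<eta>s where \<eta>s: "\<And>n. \<eta>s n \<in> S" "\<And>n. s n = (L2_inner M f (\<eta>s n), L2_inner M g (\<eta>s n))"
    by metis
  then obtain r \<eta> where "strict_mono r" "\<eta> \<in> S"
    and lim: "(\<lambda>k. l2norm M (\<lambda>x. \<eta>s (r k) x - \<eta> x)) \<longlonglongrightarrow> 0"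
    using assms(1) unfolding L2_compact_def by blast
  have SL: "S \<subseteq> L2 M"
    using assms(1) by (simp add: L2_compact_def)
  have "(s \<circ> r) \<longlonglongrightarrow> (L2_inner M f \<eta>, L2_inner M g \<eta>)"
    unfolding comp_def \<eta>s(2)
    using SL \<eta>s(1) \<open>\<eta> \<in> S\<close>
    by (intro tendsto_Pair L2_inner_tendsto_right[OF _ _ _ lim] assms(2,3)) auto
  then show "\<exists>l\<in>(\<lambda>\<eta>. (L2_inner M f \<eta>, L2_inner M g \<eta>)) ` S. \<exists>r. strict_mono r \<and> (s \<circ> r) \<longlonglongrightarrow> l"
    using \<open>strict_mono r\<close> \<open>\<eta> \<in> S\<close> by blast
qed

lemma L2_compact_convex_shift_bound:
  assumes "prob_space M" "L2_compact M S" "L2_convex S" "\<xi> \<in> L2 M"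
    and "\<eta>1 \<in> S" "Ex M \<eta>1 = 1"
    and slice_bound: "\<And>\<eta>. \<eta> \<in> S \<Longrightarrow> Ex M \<eta> = 1 \<Longrightarrow> L2_inner M \<xi> \<eta> \<le> r"
    and "r < s"
  obtains y where "\<And>\<eta>. \<eta> \<in> S \<Longrightarrow> L2_inner M \<xi> \<eta> - y * Ex M \<eta> \<le> s - y"
proof -
  have SL: "S \<subseteq> L2 M"
    using assms(2) by (simp add: L2_compact_def)
  define K where "K = (\<lambda>\<eta>. (L2_inner M (\<lambda>_. 1) \<eta>, L2_inner M \<xi> \<eta>)) ` S"
  have "convex K"
    unfolding K_def by (rule convex_L2_inner_pair_image[OF assms(3) SL L2_const[OF assms(1)] assms(4)])
  moreover have "compact K"
    unfolding K_def by (rule compact_L2_inner_pair_image[OF assms(2) L2_const[OF assms(1)] assms(4)])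
  moreover have "(1, s) \<notin> K"
  proof
    assume "(1, s) \<in> K"
    then obtain \<eta> where "\<eta> \<in> S" "Ex M \<eta> = 1" "L2_inner M \<xi> \<eta> = s"
      by (auto simp: K_def)
    with slice_bound \<open>r < s\<close> show False
      by fastforce
  qed
  ultimately obtain a b where "inner a (1, s) < b" and sep: "\<forall>z\<in>K. inner a z > b"
    using separating_hyperplane_closed_point compact_imp_closed by blast
  moreover obtain a1 a2 where a: "a = (a1, a2)"
    by (cases a)
  ultimately have below: "a1 + a2 * s < b"
    and above: "\<And>\<eta>. \<eta> \<in> S \<Longrightarrow> a1 * Ex M \<eta> + a2 * L2_inner M \<xi> \<eta> > b"
    by (auto simp: K_def)
  have "a2 * L2_inner M \<xi> \<eta>1 > a2 * s"
    using above[OF assms(5)] below assms(6) by simp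
  moreover have "L2_inner M \<xi> \<eta>1 < s"
    using slice_bound[OF assms(5,6)] \<open>r < s\<close> by simp
  ultimately have "a2 < 0"
    using mult_left_mono[of "L2_inner M \<xi> \<eta>1" s a2] by (meson less_imp_le not_le)
  show ?thesis
  proof (rule that[of "- a1 / a2"])
    fix \<eta> assume "\<eta> \<in> S"
    have "a2 * (L2_inner M \<xi> \<eta> + a1 / a2 * Ex M \<eta> - (s + a1 / a2))
        = a2 * L2_inner M \<xi> \<eta> + a1 * Ex M \<eta> - (a1 + a2 * s)"
      using \<open>a2 < 0\<close> by (simp add: field_simps)
    also have "\<dots> > 0"
      using above[OF \<open>\<eta> \<in> S\<close>] below by simp
    finally show "L2_inner M \<xi> \<eta> - - a1 / a2 * Ex M \<eta> \<le> s - - a1 / a2"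
      using \<open>a2 < 0\<close> by (simp add: zero_less_mult_iff)
  qed
qed

lemma regret_envelope_shift:
  assumes "prob_space M" "regret_envelope M V Qt" "\<xi> \<in> L2 M"
  shows "V (\<lambda>x. \<xi> x - y) = (SUP \<eta>\<in>Qt. ereal (L2_inner M \<xi> \<eta> - y * Ex M \<eta>))"
proof -
  have "Qt \<subseteq> L2 M"
    using assms(2) by (auto simp: regret_envelope_def Ptilde_def)
  then show ?thesis
    using assms(2) L2_diff_const[OF assms(1,3)]
    by (auto simp: regret_envelope_def L2_inner_diff_const_left[OF assms(1,3)] intro!: SUP_cong)
qed

lemma L2_inner_le_INF_shifted_regret:
  assumes "prob_space M" "regret_envelope M V Qt" "\<xi> \<in> L2 M" "\<eta> \<in> Qt" "Ex M \<eta> = 1"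
  shows "ereal (L2_inner M \<xi> \<eta>) \<le> (INF y::real. ereal y + V (\<lambda>x. \<xi> x - y))"
proof (rule INF_greatest)
  fix y :: real
  have "ereal (L2_inner M \<xi> \<eta> - y) \<le> V (\<lambda>x. \<xi> x - y)"
    unfolding regret_envelope_shift[OF assms(1-3)] using assms(4,5) by (auto intro: SUP_upper2)
  then show "ereal (L2_inner M \<xi> \<eta>) \<le> ereal y + V (\<lambda>x. \<xi> x - y)"
    using add_left_mono[of _ _ "ereal y"] by fastforce
qed

lemma risk_le_INF_shifted_regret:
  assumes "prob_space M" "risk_envelope M R Q" "regret_envelope M V Qt" "Q \<subseteq> Qt" "\<xi> \<in> L2 M"
  shows "R \<xi> \<le> (INF y::real. ereal y + V (\<lambda>x. \<xi> x - y))"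
proof -
  have "ereal (L2_inner M \<xi> \<eta>) \<le> (INF y::real. ereal y + V (\<lambda>x. \<xi> x - y))" if "\<eta> \<in> Q" for \<eta>
    using assms(2,4) that
    by (intro L2_inner_le_INF_shifted_regret[OF assms(1,3,5)]) (auto simp: risk_envelope_def Pset_def)
  then show ?thesis
    using assms(2,5) by (simp add: risk_envelope_def SUP_least)
qed

lemma INF_shifted_regret_le_risk:
  assumes "prob_space M" "risk_envelope M R Q" "regret_envelope M V Qt" "L2_compact M Qt"
    and "Q = Qt \<inter> Pset M" "\<xi> \<in> L2 M"
  shows "(INF y::real. ereal y + V (\<lambda>x. \<xi> x - y)) \<le> R \<xi>"
proof -
  have R_eq: "R \<xi> = (SUP \<eta>\<in>Q. ereal (L2_inner M \<xi> \<eta>))"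
    using assms(2,6) by (simp add: risk_envelope_def)
  obtain \<eta>1 where "\<eta>1 \<in> Q"
    using assms(2) by (auto simp: risk_envelope_def)
  then have \<eta>1: "\<eta>1 \<in> Qt" "Ex M \<eta>1 = 1"
    using assms(5) by (auto simp: Pset_def)
  have "L2_convex Qt"
    using assms(3) by (simp add: regret_envelope_def)
  have in_Q: "\<eta> \<in> Q" if "\<eta> \<in> Qt" "Ex M \<eta> = 1" for \<eta>
    using assms(3,5) that by (auto simp: regret_envelope_def Ptilde_def Pset_def)
  show ?thesis
  proof (cases "R \<xi>")
    case (real r)
    show ?thesis
    proof (rule ereal_le_epsilon2)
      fix e :: real
      assume "0 < e"
      have slice_bound: "L2_inner M \<xi> \<eta> \<le> r" if "\<eta> \<in> Qt" "Ex M \<eta> = 1" for \<eta>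
      proof -
        have "ereal (L2_inner M \<xi> \<eta>) \<le> R \<xi>"
          unfolding R_eq by (rule SUP_upper[OF in_Q[OF that]])
        then show ?thesis
          using real by simp
      qed
      have "r < r + e"
        using \<open>0 < e\<close> by simp
      then obtain y where "\<And>\<eta>. \<eta> \<in> Qt \<Longrightarrow> L2_inner M \<xi> \<eta> - y * Ex M \<eta> \<le> r + e - y"
        using L2_compact_convex_shift_bound[OF assms(1,4) \<open>L2_convex Qt\<close> assms(6) \<eta>1 slice_bound]
        by blast
      then have "V (\<lambda>x. \<xi> x - y) \<le> ereal (r + e - y)"
        unfolding regret_envelope_shift[OF assms(1,3,6)] by (simp add: SUP_least)
      then have "ereal y + V (\<lambda>x. \<xi> x - y) \<le> R \<xi> + ereal e"
        using add_left_mono[of _ _ "ereal y"] real by fastforce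
      then show "(INF y::real. ereal y + V (\<lambda>x. \<xi> x - y)) \<le> R \<xi> + ereal e"
        by (rule INF_lower2[OF UNIV_I])
    qed
  next
    case MInf
    have "ereal (L2_inner M \<xi> \<eta>1) \<le> R \<xi>"
      unfolding R_eq by (rule SUP_upper[OF \<open>\<eta>1 \<in> Q\<close>])
    with MInf show ?thesis
      by simp
  qed simp
qed

lemma risk_envelope_subset_regret_envelope:
  assumes "prob_space M" "risk_envelope M R Q" "regret_envelope M V Qt" "L2_compact M Qt"
    and "\<forall>\<xi>\<in>L2 M. R \<xi> = (INF y::real. ereal y + V (\<lambda>x. \<xi> x - y))"
  shows "Q \<subseteq> Qt"
proof
  fix \<eta>0
  assume "\<eta>0 \<in> Q"
  show "\<eta>0 \<in> Qt"
  proof (rule ccontr)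
    assume "\<eta>0 \<notin> Qt"
    moreover have "\<eta>0 \<in> L2 M"
      using assms(2) \<open>\<eta>0 \<in> Q\<close> by (auto simp: risk_envelope_def Pset_def)
    moreover have "L2_convex Qt" "L2_closed M Qt" "Qt \<noteq> {}"
      using assms(3) by (simp_all add: regret_envelope_def)
    ultimately obtain \<xi> c where "\<xi> \<in> L2 M" and bound: "\<And>\<eta>. \<eta> \<in> Qt \<Longrightarrow> L2_inner M \<xi> \<eta> \<le> c"
      and "c < L2_inner M \<xi> \<eta>0"
      using L2_separation_compact_convex[OF assms(4)] by blast
    have "ereal (L2_inner M \<xi> \<eta>0) \<le> R \<xi>"
      using assms(2) \<open>\<xi> \<in> L2 M\<close> \<open>\<eta>0 \<in> Q\<close> by (auto simp: risk_envelope_def intro: SUP_upper)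
    also have "\<dots> = (INF y::real. ereal y + V (\<lambda>x. \<xi> x - y))"
      using assms(5) \<open>\<xi> \<in> L2 M\<close> by blast
    also have "\<dots> \<le> ereal 0 + V (\<lambda>x. \<xi> x - 0)"
      by (rule INF_lower) simp
    also have "\<dots> \<le> ereal c"
      using assms(3) \<open>\<xi> \<in> L2 M\<close> bound by (auto simp: regret_envelope_def intro: SUP_least)
    finally show False
      using \<open>c < L2_inner M \<xi> \<eta>0\<close> by simp
  qed
qed

lemma regret_envelope_slice_subset_risk_envelope:
  assumes "prob_space M" "risk_envelope M R Q" "regret_envelope M V Qt" "L2_compact M Qt"
    and "\<forall>\<xi>\<in>L2 M. R \<xi> = (INF y::real. ereal y + V (\<lambda>x. \<xi> x - y))"
  shows "Qt \<inter> Pset M \<subseteq> Q"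
proof
  fix \<eta>0
  assume "\<eta>0 \<in> Qt \<inter> Pset M"
  show "\<eta>0 \<in> Q"
  proof (rule ccontr)
    assume "\<eta>0 \<notin> Q"
    moreover have "L2_compact M Q"
      using L2_compact_closed_subset[OF assms(4) risk_envelope_subset_regret_envelope[OF assms]] assms(2)
      by (simp add: risk_envelope_def)
    moreover have "\<eta>0 \<in> L2 M"
      using \<open>\<eta>0 \<in> Qt \<inter> Pset M\<close> by (simp add: Pset_def)
    moreover have "L2_convex Q" "L2_closed M Q" "Q \<noteq> {}"
      using assms(2) by (simp_all add: risk_envelope_def)
    ultimately obtain \<xi> c where "\<xi> \<in> L2 M" and bound: "\<And>\<eta>. \<eta> \<in> Q \<Longrightarrow> L2_inner M \<xi> \<eta> \<le> c"
      and "c < L2_inner M \<xi> \<eta>0"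
      using L2_separation_compact_convex by blast
    have "ereal (L2_inner M \<xi> \<eta>0) \<le> (INF y::real. ereal y + V (\<lambda>x. \<xi> x - y))"
      using \<open>\<eta>0 \<in> Qt \<inter> Pset M\<close>
      by (intro L2_inner_le_INF_shifted_regret[OF assms(1,3) \<open>\<xi> \<in> L2 M\<close>]) (auto simp: Pset_def)
    also have "\<dots> = R \<xi>"
      using assms(5) \<open>\<xi> \<in> L2 M\<close> by simp
    also have "\<dots> \<le> ereal c"
      using assms(2) \<open>\<xi> \<in> L2 M\<close> bound by (auto simp: risk_envelope_def intro: SUP_least)
    finally show False
      using \<open>c < L2_inner M \<xi> \<eta>0\<close> by simp
  qed
qed

text \<open>Only the dual representations enter the proof.\<close>
theorem theorem1:
  fixes M :: "'a measure"
    and R V :: "('a \<Rightarrow> real) \<Rightarrow> ereal"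
    and Q Qt :: "('a \<Rightarrow> real) set"
  assumes "prob_space M"
    and "coherent_risk_measure M R" and "risk_envelope M R Q"
    and "coherent_regret_measure M V" and "regret_envelope M V Qt"
    and "L2_compact M Qt"
  shows "(\<forall>\<xi>\<in>L2 M. R \<xi> = (INF y::real. ereal y + V (\<lambda>x. \<xi> x - y)))
         \<longleftrightarrow> Q = Qt \<inter> Pset M"
proof
  assume "\<forall>\<xi>\<in>L2 M. R \<xi> = (INF y::real. ereal y + V (\<lambda>x. \<xi> x - y))"
  then show "Q = Qt \<inter> Pset M"
    using risk_envelope_subset_regret_envelope[OF assms(1,3,5,6)]
      regret_envelope_slice_subset_risk_envelope[OF assms(1,3,5,6)] assms(3)
    by (auto simp: risk_envelope_def)
next
  assume Q_eq: "Q = Qt \<inter> Pset M"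
  show "\<forall>\<xi>\<in>L2 M. R \<xi> = (INF y::real. ereal y + V (\<lambda>x. \<xi> x - y))"
  proof
    fix \<xi>
    assume "\<xi> \<in> L2 M"
    have "Q \<subseteq> Qt"
      using Q_eq by blast
    show "R \<xi> = (INF y::real. ereal y + V (\<lambda>x. \<xi> x - y))"
      by (rule antisym[OF risk_le_INF_shifted_regret[OF assms(1,3,5) \<open>Q \<subseteq> Qt\<close> \<open>\<xi> \<in> L2 M\<close>]
            INF_shifted_regret_le_risk[OF assms(1,3,5,6) Q_eq \<open>\<xi> \<in> L2 M\<close>]])
  qed
qed

end
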